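(* Fix $R\in[0,1)$ and let $r_1=\tfrac12-\tfrac R2+\tfrac{1-R^2}4$, $r_2=\tfrac12-\tfrac R2-\tfrac{1-R^2}4$. For $0<\mu<L$ with $\kappa=\mu/L$, set $\mu_1=\mu$, $L_1=\mu+r_1(L-\mu)$, $\mu_2=L-r_2(L-\mu)$, $L_2=L$, $$s=1+2\frac{\mu_1L_1\mu_2}{(L_2-\mu_1)(L_2-L_1)(L_2-\mu_2)},\qquad \sqrt m=\big(s-\sqrt{s^2-1}\big)^{1/3}$$ (the asymptotic rate factor of the optimally tuned 3-cycle heavy ball method on $[\mu_1,L_1]\cup[\mu_2,L_2]$). Then as $\kappa\to0$, $$\sqrt m=1-2\sqrt\kappa\sqrt{\frac{1-R^2/9}{1-R^2}}+o(\sqrt\kappa).$$ *)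

theory Defs
  imports Complex_Main
begin

definition hb_r1 :: "real \<Rightarrow> real" where
  "hb_r1 R = 1/2 - R/2 + (1 - R^2)/4"

definition hb_r2 :: "real \<Rightarrow> real" where
  "hb_r2 R = 1/2 - R/2 - (1 - R^2)/4"

definition hb_s :: "real \<Rightarrow> real \<Rightarrow> real \<Rightarrow> real" where
  "hb_s R \<mu> L =
    (let \<mu>1 = \<mu>; L1 = \<mu> + hb_r1 R * (L - \<mu>);
         \<mu>2 = L - hb_r2 R * (L - \<mu>); L2 = L
     in 1 + 2 * (\<mu>1 * L1 * \<mu>2) / ((L2 - \<mu>1) * (L2 - L1) * (L2 - \<mu>2)))"

definition hb_sqrt_m :: "real \<Rightarrow> real \<Rightarrow> real \<Rightarrow> real" where
  "hb_sqrt_m R \<mu> L = root 3 (hb_s R \<mu> L - sqrt ((hb_s R \<mu> L)^2 - 1))"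

end

theory Submission
  imports Defs
begin

text \<open>With \<open>\<kappa> = \<mu> / L\<close>, homogeneity gives \<open>s = 1 + \<kappa> H(\<kappa>)\<close> for a rational function \<open>H\<close> that is
  continuous at \<open>0\<close> with \<open>H(0) = 2 (9 - R\<^sup>2) / (1 - R\<^sup>2)\<close>. Hence the smaller root
  \<open>s - sqrt (s\<^sup>2 - 1)\<close> of \<open>t\<^sup>2 - 2 s t + 1\<close> is \<open>1 - sqrt (2 H(0) \<kappa>) + o(sqrt \<kappa>)\<close>, and taking the
  cube root divides the first-order term by three.\<close>

lemma tendsto_root3_diff_quotient:
  assumes "((\<lambda>x. (U x - 1) / g x) \<longlongrightarrow> a) F" and "(U \<longlongrightarrow> 1) F"
  shows "((\<lambda>x. (root 3 (U x) - 1) / g x) \<longlongrightarrow> a / 3) F"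
proof -
  define A where "A x = root 3 (U x)" for x
  have denom_pos: "A x ^ 2 + A x + 1 > 0" for x
  proof -
    have "A x ^ 2 + A x + 1 = (A x + 1/2)^2 + 3/4" by (simp add: algebra_simps power2_eq_square)
    then show ?thesis by (simp add: add_nonneg_pos)
  qed
  have factor: "(root 3 (U x) - 1) / g x = (U x - 1) / g x / (A x ^ 2 + A x + 1)" for x
  proof -
    have "A x ^ 3 = U x" unfolding A_def by (simp add: odd_real_root_pow)
    then have "U x - 1 = (A x - 1) * (A x ^ 2 + A x + 1)"
      by (simp add: algebra_simps power2_eq_square power3_eq_cube)
    then have "(U x - 1) / (A x ^ 2 + A x + 1) = root 3 (U x) - 1"
      using denom_pos[of x] unfolding A_def by simp
    then show ?thesis by (metis divide_divide_eq_left mult.commute)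
  qed
  have "(A \<longlongrightarrow> root 3 1) F" unfolding A_def by (intro tendsto_intros assms(2))
  then have "((\<lambda>x. (U x - 1) / g x / (A x ^ 2 + A x + 1)) \<longlongrightarrow> a / (1 ^ 2 + 1 + 1)) F"
    by (intro tendsto_intros assms(1)) auto
  then show ?thesis unfolding factor by simp
qed

lemma tendsto_lower_root_quotient:
  fixes H :: "real \<Rightarrow> real"
  assumes "(H \<longlongrightarrow> c) (at_right 0)"
  defines "s \<equiv> \<lambda>k. 1 + k * H k"
  shows "((\<lambda>k. (s k - sqrt (s k ^ 2 - 1) - 1) / sqrt k) \<longlongrightarrow> - sqrt (2 * c)) (at_right 0)"
    and "((\<lambda>k. s k - sqrt (s k ^ 2 - 1)) \<longlongrightarrow> 1) (at_right 0)"
proof -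
  have sqrt_tendsto: "((\<lambda>k::real. sqrt k) \<longlongrightarrow> 0) (at_right 0)"
    using tendsto_real_sqrt[OF tendsto_ident_at[of 0 "{0<..}"]] by simp
  have "(s k - sqrt (s k ^ 2 - 1) - 1) / sqrt k = sqrt k * H k - sqrt (H k * (2 + k * H k))"
    if "k > 0" for k
  proof -
    have "s k ^ 2 - 1 = k * (H k * (2 + k * H k))"
      unfolding s_def by (simp add: algebra_simps power2_eq_square)
    then have "sqrt (s k ^ 2 - 1) = sqrt k * sqrt (H k * (2 + k * H k))"
      by (simp add: real_sqrt_mult)
    moreover have "k = sqrt k * sqrt k" using that by simp
    ultimately show ?thesis using that unfolding s_def by (simp add: field_simps)
  qed
  then have "\<forall>\<^sub>F k in at_right 0. sqrt k * H k - sqrt (H k * (2 + k * H k))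
      = (s k - sqrt (s k ^ 2 - 1) - 1) / sqrt k"
    using eventually_at_right_less[of 0] by (auto elim!: eventually_mono)
  moreover have "((\<lambda>k. sqrt k * H k - sqrt (H k * (2 + k * H k)))
      \<longlongrightarrow> 0 * c - sqrt (c * (2 + 0 * c))) (at_right 0)"
    by (intro tendsto_intros sqrt_tendsto assms(1) tendsto_ident_at)
  ultimately show "((\<lambda>k. (s k - sqrt (s k ^ 2 - 1) - 1) / sqrt k) \<longlongrightarrow> - sqrt (2 * c)) (at_right 0)"
    by (auto dest: tendsto_cong[THEN iffD1, rotated] simp: mult.commute)
  have "((\<lambda>k. s k - sqrt (s k ^ 2 - 1)) \<longlongrightarrow> (1 + 0 * c) - sqrt ((1 + 0 * c) ^ 2 - 1)) (at_right 0)"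
    unfolding s_def by (intro tendsto_intros assms(1) tendsto_ident_at)
  then show "((\<lambda>k. s k - sqrt (s k ^ 2 - 1)) \<longlongrightarrow> 1) (at_right 0)" by simp
qed

lemma tendsto_quotient_imp_error_bound:
  fixes f g :: "real \<Rightarrow> real"
  assumes "((\<lambda>k. (f k - a) / g k) \<longlongrightarrow> b) (at_right 0)" and "\<And>k. k > 0 \<Longrightarrow> g k > 0"
  shows "\<forall>\<epsilon>>0. \<exists>\<delta>>0. \<forall>k. 0 < k \<and> k < \<delta> \<longrightarrow> \<bar>f k - (a + b * g k)\<bar> \<le> \<epsilon> * g k"
proof (intro allI impI)
  fix \<epsilon> :: real
  assume "\<epsilon> > 0"
  with tendstoD[OF assms(1)] obtain \<delta> where "\<delta> > 0"
    and close: "\<And>k. 0 < k \<Longrightarrow> k < \<delta> \<Longrightarrow> \<bar>(f k - a) / g k - b\<bar> < \<epsilon>"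
    unfolding eventually_at_right_field dist_real_def by (metis add_0)
  have "\<bar>f k - (a + b * g k)\<bar> \<le> \<epsilon> * g k" if "0 < k" "k < \<delta>" for k
  proof -
    have "\<bar>f k - (a + b * g k)\<bar> = \<bar>(f k - a) / g k - b\<bar> * g k"
      using assms(2)[OF that(1)] by (simp add: field_simps abs_mult)
    also have "\<dots> \<le> \<epsilon> * g k"
      using close[OF that] assms(2)[OF that(1)] by simp
    finally show ?thesis .
  qed
  with \<open>\<delta> > 0\<close> show "\<exists>\<delta>>0. \<forall>k. 0 < k \<and> k < \<delta> \<longrightarrow> \<bar>f k - (a + b * g k)\<bar> \<le> \<epsilon> * g k"
    by blast
qed

definition hb_s_coeff :: "real \<Rightarrow> real \<Rightarrow> real" where
  "hb_s_coeff R k = 2 * (k + hb_r1 R * (1 - k)) * (1 - hb_r2 R * (1 - k))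
     / ((1 - k)^3 * (1 - hb_r1 R) * hb_r2 R)"

lemma hb_s_eq_coeff:
  assumes "L \<noteq> 0"
  shows "hb_s R \<mu> L = 1 + (\<mu> / L) * hb_s_coeff R (\<mu> / L)"
proof -
  define k a b where "k = \<mu> / L" and "a = hb_r1 R" and "b = hb_r2 R"
  have \<mu>: "\<mu> = k * L" using assms unfolding k_def by simp
  have "hb_s R \<mu> L = 1 + 2 * (L^3 * (k * (k + a * (1 - k)) * (1 - b * (1 - k))))
      / (L^3 * ((1 - k)^3 * (1 - a) * b))"
    unfolding hb_s_def Let_def \<mu> a_def [symmetric] b_def [symmetric]
    by (simp add: algebra_simps power3_eq_cube)
  also have "\<dots> = 1 + 2 * (k * (k + a * (1 - k)) * (1 - b * (1 - k))) / ((1 - k)^3 * (1 - a) * b)"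
    using assms by (simp add: ac_simps)
  also have "\<dots> = 1 + k * hb_s_coeff R k"
    unfolding hb_s_coeff_def a_def b_def by (simp add: mult_ac)
  finally show ?thesis unfolding k_def .
qed

lemma hb_r1_eq: "hb_r1 R = (1 - R) * (3 + R) / 4"
  unfolding hb_r1_def by (simp add: field_simps power2_eq_square)

lemma hb_r2_eq: "hb_r2 R = (1 - R)^2 / 4"
  unfolding hb_r2_def by (simp add: field_simps power2_eq_square)

lemma one_minus_hb_r1_eq: "1 - hb_r1 R = (1 + R)^2 / 4"
  unfolding hb_r1_def by (simp add: field_simps power2_eq_square)

lemma one_minus_hb_r2_eq: "1 - hb_r2 R = (1 + R) * (3 - R) / 4"
  unfolding hb_r2_def by (simp add: field_simps power2_eq_square)

lemma hb_s_coeff_continuous: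
  assumes "R \<noteq> 1" "R \<noteq> -1"
  shows "isCont (hb_s_coeff R) 0"
proof -
  have "hb_r2 R \<noteq> 0" "1 - hb_r1 R \<noteq> 0"
    using assms by (auto simp: hb_r2_eq one_minus_hb_r1_eq)
  then show ?thesis unfolding hb_s_coeff_def by (intro continuous_intros) auto
qed

lemma hb_s_coeff_at_0:
  assumes "R \<noteq> 1" "R \<noteq> -1"
  shows "hb_s_coeff R 0 = 2 * (9 - R^2) / (1 - R^2)"
proof -
  have nonzero: "1 - R^2 \<noteq> 0"
    using assms power2_eq_1_iff[of R] by auto
  have "hb_s_coeff R 0 = 2 * (hb_r1 R * (1 - hb_r2 R)) / ((1 - hb_r1 R) * hb_r2 R)"
    unfolding hb_s_coeff_def by simp
  also have "\<dots> = 2 * ((1 - R^2) * (9 - R^2) / 16) / ((1 - R^2)^2 / 16)"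
  proof -
    have num: "hb_r1 R * (1 - hb_r2 R) = (1 - R^2) * (9 - R^2) / 16"
      unfolding hb_r1_eq one_minus_hb_r2_eq by (simp add: power2_eq_square algebra_simps)
    have den: "(1 - hb_r1 R) * hb_r2 R = (1 - R^2)^2 / 16"
      unfolding one_minus_hb_r1_eq hb_r2_eq by (simp add: power2_eq_square algebra_simps)
    show ?thesis unfolding num den ..
  qed
  also have "\<dots> = 2 * (9 - R^2) / (1 - R^2)"
    using nonzero by (simp add: power2_eq_square)
  finally show ?thesis .
qed

lemma hb_sqrt_m_homogeneous:
  assumes "L \<noteq> 0"
  shows "hb_sqrt_m R \<mu> L = hb_sqrt_m R (\<mu> / L) 1"
  unfolding hb_sqrt_m_def hb_s_eq_coeff[OF assms] hb_s_eq_coeff[where L = 1, simplified] by simp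

lemma hb_sqrt_m_tendsto:
  assumes "R \<noteq> 1" "R \<noteq> -1"
  shows "((\<lambda>k. (hb_sqrt_m R k 1 - 1) / sqrt k) \<longlongrightarrow> - (sqrt (2 * hb_s_coeff R 0) / 3)) (at_right 0)"
  using tendsto_root3_diff_quotient[OF tendsto_lower_root_quotient
      [OF isCont_tendsto_compose[OF hb_s_coeff_continuous[OF assms] tendsto_ident_at]]]
  unfolding hb_sqrt_m_def hb_s_eq_coeff[where L = 1, simplified] by simp

lemma hb_rate_constant:
  assumes "R \<noteq> 1" "R \<noteq> -1"
  shows "sqrt (2 * hb_s_coeff R 0) / 3 = 2 * sqrt ((1 - R^2 / 9) / (1 - R^2))"
proof -
  have "1 - R^2 \<noteq> 0" using assms power2_eq_1_iff[of R] by auto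
  then have coeff: "2 * hb_s_coeff R 0 / 3^2 = 2^2 * ((1 - R^2 / 9) / (1 - R^2))"
    using assms by (simp add: hb_s_coeff_at_0 field_simps)
  have "sqrt (2 * hb_s_coeff R 0) / 3 = sqrt (2 * hb_s_coeff R 0 / 3^2)"
    by (simp add: real_sqrt_divide)
  also have "\<dots> = 2 * sqrt ((1 - R^2 / 9) / (1 - R^2))"
    unfolding coeff real_sqrt_mult by simp
  finally show ?thesis .
qed

theorem mainTheorem17:
  fixes R :: real
  assumes "0 \<le> R" and "R < 1"
  shows "\<forall>\<epsilon>>0. \<exists>\<delta>>0. \<forall>\<mu> L :: real. 0 < \<mu> \<and> \<mu> < L \<and> \<mu> / L < \<delta> \<longrightarrow>
           \<bar>hb_sqrt_m R \<mu> L - (1 - 2 * sqrt (\<mu> / L) * sqrt ((1 - R^2 / 9) / (1 - R^2)))\<bar>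
             \<le> \<epsilon> * sqrt (\<mu> / L)"
proof (intro allI impI)
  let ?q = "sqrt ((1 - R^2 / 9) / (1 - R^2))"
  fix \<epsilon> :: real
  assume "\<epsilon> > 0"
  have R: "R \<noteq> 1" "R \<noteq> -1" using assms by auto
  have "((\<lambda>k. (hb_sqrt_m R k 1 - 1) / sqrt k) \<longlongrightarrow> - 2 * ?q) (at_right 0)"
    using hb_sqrt_m_tendsto[OF R] unfolding hb_rate_constant[OF R] by simp
  from tendsto_quotient_imp_error_bound[OF this] \<open>\<epsilon> > 0\<close> obtain \<delta> where "\<delta> > 0" and close:
    "\<And>k. 0 < k \<Longrightarrow> k < \<delta> \<Longrightarrow> \<bar>hb_sqrt_m R k 1 - (1 + - 2 * ?q * sqrt k)\<bar> \<le> \<epsilon> * sqrt k"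
    by auto
  have "\<bar>hb_sqrt_m R \<mu> L - (1 - 2 * sqrt (\<mu> / L) * ?q)\<bar> \<le> \<epsilon> * sqrt (\<mu> / L)"
    if "0 < \<mu> \<and> \<mu> < L \<and> \<mu> / L < \<delta>" for \<mu> L
    using close[of "\<mu> / L"] hb_sqrt_m_homogeneous[of L R \<mu>] that by (simp add: mult_ac)
  with \<open>\<delta> > 0\<close> show "\<exists>\<delta>>0. \<forall>\<mu> L :: real. 0 < \<mu> \<and> \<mu> < L \<and> \<mu> / L < \<delta> \<longrightarrow>
      \<bar>hb_sqrt_m R \<mu> L - (1 - 2 * sqrt (\<mu> / L) * ?q)\<bar> \<le> \<epsilon> * sqrt (\<mu> / L)"
    by blast
qed

end
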